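(* Let $P$ be a matrix as in the context, with column index set $\mathcal{F}$. Let $A\subseteq\mathcal{F}$ with $|A|=r+1$, $\det(P_A)\neq0$ and $A\cap\mathcal{F}'=\emptyset$. Then one of the following holds: (i) $|A\cap\mathcal{F}_i|=1$ for all $i=0,\dots,r$, and $|\det(P_A)|=|\mu(j_0,\dots,j_r)|$ for some numbers $1\le j_i\le n_i$; (ii) there exist $0\le i_0,i_1\le r$ with $|A\cap\mathcal{F}_{i_0}|=2$, $|A\cap\mathcal{F}_{i_1}|=0$ and $|A\cap\mathcal{F}_i|=1$ for all other $i$, and $|\det(P_A)|=|\nu(i_0,j_{i_0},j'_{i_0})|\prod_{i\neq i_0,i_1}l_{ij_i}$ for some numbers $1\le j_i\le n_i$ and $1\le j'_{i_0}\le n_{i_0}$.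
   Context: Fix integers $r\ge1$, $n_0,\dots,n_r\ge1$, vectors $l_i\in\mathbb{Z}_{\ge1}^{n_i}$, $d_i\in\mathbb{Z}^{n_i}$ with $\gcd(l_{ij},d_{ij})=1$ and $d_{i1}/l_{i1}>\dots>d_{in_i}/l_{in_i}$. Let $e_1,\dots,e_{r+1}$ be the standard basis of $\mathbb{Z}^{r+1}$, $u=e_{r+1}$, $e_0=-(e_1+\dots+e_r)$, $v_{ij}=l_{ij}e_i+d_{ij}u$. Let $\mathcal{F}_i=\{f_{i1},\dots,f_{in_i}\}$, $\mathcal{F}'$ one of $\emptyset,\{f^+\},\{f^-\},\{f^+,f^-\}$ (types (ee),(pe),(ep),(pp)), $\mathcal{F}=\mathcal{F}_0\cup\dots\cup\mathcal{F}_r\cup\mathcal{F}'$, and $P$ the $(r+1)\times|\mathcal{F}|$ matrix with column $v_{ij}$ at $f_{ij}$, $u$ at $f^+$, $-u$ at $f^-$. For $|A|=r+1$, $P_A$ is the square submatrix of columns indexed by $A$. Define $\mu(j_0,\dots,j_r)=\sum_{i_0=0}^r d_{i_0j_{i_0}}\prod_{i\ne i_0}l_{ij_i}$ and $\nu(i,j,j')=l_{ij}d_{ij'}-l_{ij'}d_{ij}$. *)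

theory Defs
  imports Main "Jordan_Normal_Form.Determinant"
begin

text \<open>Column indices: Fc i j is f_{ij}; Fplus is f^+; Fminus is f^-.\<close>
datatype col = Fc nat nat | Fplus | Fminus

definition Fblock :: "(nat \<Rightarrow> nat) \<Rightarrow> nat \<Rightarrow> col set" where
  "Fblock n i = {Fc i j | j. 1 \<le> j \<and> j \<le> n i}"

definition Fset :: "nat \<Rightarrow> (nat \<Rightarrow> nat) \<Rightarrow> col set \<Rightarrow> col set" where
  "Fset r n F' = (\<Union>i\<le>r. Fblock n i) \<union> F'"

text \<open>Entry in row a (a = 0..r) of the column of P indexed by c.
  Rows 0..r-1 are the coordinates of e_1..e_r, row r is the coordinate of u = e_{r+1};
  e_0 = -(e_1+...+e_r).\<close>
fun Pcol :: "nat \<Rightarrow> (nat \<Rightarrow> nat \<Rightarrow> int) \<Rightarrow> (nat \<Rightarrow> nat \<Rightarrow> int) \<Rightarrow> col \<Rightarrow> nat \<Rightarrow> int" where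
  "Pcol r l d (Fc i j) a =
     (if a = r then d i j else if i = 0 then - l i j else if a + 1 = i then l i j else 0)"
| "Pcol r l d Fplus a = (if a = r then 1 else 0)"
| "Pcol r l d Fminus a = (if a = r then -1 else 0)"

text \<open>The square submatrix P_A, columns of A in some (arbitrary) order;
  its determinant is determined up to sign.\<close>
definition PA :: "nat \<Rightarrow> (nat \<Rightarrow> nat \<Rightarrow> int) \<Rightarrow> (nat \<Rightarrow> nat \<Rightarrow> int) \<Rightarrow> col set \<Rightarrow> int mat" where
  "PA r l d A = (let f = (SOME f. bij_betw f {..<Suc r} A) in
     mat (Suc r) (Suc r) (\<lambda>(a, b). Pcol r l d (f b) a))"

definition mu :: "nat \<Rightarrow> (nat \<Rightarrow> nat \<Rightarrow> int) \<Rightarrow> (nat \<Rightarrow> nat \<Rightarrow> int) \<Rightarrow> (nat \<Rightarrow> nat) \<Rightarrow> int" where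
  "mu r l d j = (\<Sum>i0\<in>{0..r}. d i0 (j i0) * (\<Prod>i\<in>{0..r} - {i0}. l i (j i)))"

definition nu :: "(nat \<Rightarrow> nat \<Rightarrow> int) \<Rightarrow> (nat \<Rightarrow> nat \<Rightarrow> int) \<Rightarrow> nat \<Rightarrow> nat \<Rightarrow> nat \<Rightarrow> int" where
  "nu l d i j j' = l i j * d i j' - l i j' * d i j"

end

theory Submission
  imports Defs
begin

(* Write c_i = |A \<inter> F_i|, so that the c_i add up to r + 1. For i \<ge> 1 the row of P for the
   e_i-coordinate is nonzero only on the blocks F_0 and F_i; so if two blocks were missed by A,
   P_A would have a zero row or two equal rows. Hence at most one c_i vanishes, which leaves
   exactly the profiles (i) and (ii). In both, a suitable ordering of the columns makes P_A an
   arrowhead matrix (diagonal apart from its last row and column) whose determinant is mu in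
   case (i), and nu times the remaining l_ij in case (ii) when the empty block is F_0. The case
   of another empty block F_k reduces to that one via the automorphism of the lattice
   exchanging e_0 and e_k. *)

lemma det_arrowhead:
  fixes M :: "'a :: idom mat"
  assumes M: "M \<in> carrier_mat (Suc r) (Suc r)"
    and off_diag: "\<And>a b. a < r \<Longrightarrow> b < r \<Longrightarrow> a \<noteq> b \<Longrightarrow> M $$ (a, b) = 0"
    and diag: "\<And>a. a < r \<Longrightarrow> M $$ (a, a) \<noteq> 0"
  shows "det M = M $$ (r, r) * (\<Prod>a<r. M $$ (a, a))
     - (\<Sum>b<r. M $$ (b, r) * M $$ (r, b) * (\<Prod>a\<in>{..<r} - {b}. M $$ (a, a)))"
proof -
  define c0 where "c0 = (\<Prod>a<r. M $$ (a, a))"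
  define w where "w b = - M $$ (r, b) * (\<Prod>a\<in>{..<r} - {b}. M $$ (a, a))" for b
  \<comment> \<open>E is lower triangular with determinant c0, and its last row makes E * M upper triangular.\<close>
  define E where "E = mat (Suc r) (Suc r) (\<lambda>(a, b). if a < r then of_bool (a = b)
      else if b < r then w b else c0)"
  have E: "E \<in> carrier_mat (Suc r) (Suc r)" by (simp add: E_def)
  have c0_nz: "c0 \<noteq> 0" using diag by (simp add: c0_def)
  have det_E: "det E = c0"
    by (subst det_lower_triangular[OF _ E]) (auto simp: E_def prod_list_diag_prod)
  have EM_top: "(E * M) $$ (a, b) = M $$ (a, b)" if "a < r" "b < Suc r" for a b
  proof -
    have "(E * M) $$ (a, b) = (\<Sum>c<Suc r. if a = c then M $$ (c, b) else 0)"
      using that M by (auto simp: E_def scalar_prod_def times_mat_def lessThan_atLeast0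
          intro!: sum.cong)
    then show ?thesis using that by simp
  qed
  have EM_bottom: "(E * M) $$ (r, b) = (\<Sum>c<r. w c * M $$ (c, b)) + c0 * M $$ (r, b)"
    if "b < Suc r" for b
    using that M by (simp add: E_def scalar_prod_def times_mat_def lessThan_atLeast0 [symmetric]
        lessThan_Suc)
  have EM_bottom_left: "(E * M) $$ (r, b) = 0" if "b < r" for b
  proof -
    have "(\<Sum>c<r. w c * M $$ (c, b)) = w b * M $$ (b, b)"
      using that off_diag by (subst sum.remove[of _ b]) (auto intro!: sum.neutral)
    also have "\<dots> = - M $$ (r, b) * c0"
      using that by (simp add: w_def c0_def prod.remove[of "{..<r}" b] algebra_simps)
    finally show ?thesis using that EM_bottom[of b] by simp
  qed
  have "det (E * M) = (\<Prod>a<Suc r. (E * M) $$ (a, a))"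
  proof (subst det_upper_triangular)
    show "upper_triangular (E * M)"
    proof (rule upper_triangularI)
      fix a b assume "b < a" "a < dim_row (E * M)"
      then show "(E * M) $$ (a, b) = 0"
        using E EM_top off_diag EM_bottom_left by (cases "a = r") auto
    qed
  qed (use E M in \<open>auto simp: prod_list_diag_prod lessThan_atLeast0\<close>)
  also have "\<dots> = c0 * ((\<Sum>c<r. w c * M $$ (c, r)) + c0 * M $$ (r, r))"
    using EM_top EM_bottom[of r] by (simp add: c0_def mult.commute)
  finally have "c0 * det M = c0 * ((\<Sum>c<r. w c * M $$ (c, r)) + c0 * M $$ (r, r))"
    using det_mult[OF E M] det_E by simp
  then have "det M = (\<Sum>c<r. w c * M $$ (c, r)) + c0 * M $$ (r, r)"
    using c0_nz by simp
  then show ?thesis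
    by (simp add: w_def c0_def algebra_simps sum_negf)
qed

lemma det_permute_cols:
  assumes M: "(M :: 'a :: comm_ring_1 mat) \<in> carrier_mat n n" and p: "p permutes {0..<n}"
  shows "det (mat n n (\<lambda>(i, j). M $$ (i, p j))) = signof p * det M"
proof -
  have "transpose_mat (mat n n (\<lambda>(i, j). M $$ (i, p j))) = mat n n (\<lambda>(i, j). transpose_mat M $$ (p i, j))"
    by (rule eq_matI) (use M permutes_in_image[OF p] in \<open>simp_all add: atLeast0LessThan\<close>)
  then have "det (mat n n (\<lambda>(i, j). M $$ (i, p j))) = det (mat n n (\<lambda>(i, j). transpose_mat M $$ (p i, j)))"
    using det_transpose[of "mat n n (\<lambda>(i, j). M $$ (i, p j))" n] by simp
  also have "\<dots> = signof p * det M"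
    using M p by (simp add: det_permute_rows det_transpose)
  finally show ?thesis .
qed

lemma sum_eq_Suc_cases [consumes 2]:
  fixes c :: "nat \<Rightarrow> nat"
  assumes sum: "(\<Sum>i\<le>r. c i) = Suc r"
    and zero_unique: "\<forall>i\<le>r. \<forall>k\<le>r. c i = 0 \<and> c k = 0 \<longrightarrow> i = k"
  obtains (all_one) "\<forall>i\<le>r. c i = 1"
    | (one_double) i0 i1 where "i0 \<le> r" "c i0 = 2" "i1 \<le> r" "c i1 = 0"
        "\<forall>i\<le>r. i \<noteq> i0 \<and> i \<noteq> i1 \<longrightarrow> c i = 1"
proof (cases "\<exists>i1\<le>r. c i1 = 0")
  case False
  then have pos: "1 \<le> c i" if "i \<le> r" for i
    using that by (simp add: Suc_le_eq)
  have "(\<Sum>i\<le>r. c i - 1) = 0"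
    using sum pos by (subst sum_subtractf_nat) auto
  then have "c i = 1" if "i \<le> r" for i
    using that pos[OF that] by (simp add: le_antisym)
  then show ?thesis
    using all_one by blast
next
  case True
  then obtain i1 where i1: "i1 \<le> r" "c i1 = 0" by blast
  define S where "S = {..r} - {i1}"
  have pos: "1 \<le> c i" if "i \<in> S" for i
  proof -
    have "i \<le> r" "i \<noteq> i1"
      using that by (auto simp: S_def)
    then show ?thesis
      using zero_unique i1 by (metis less_one not_le)
  qed
  have "(\<Sum>i\<in>S. c i) = Suc r"
    using sum i1 by (simp add: S_def sum.remove)
  then have "(\<Sum>i\<in>S. c i - 1) = Suc 0"
    using i1 pos by (subst sum_subtractf_nat) (auto simp: S_def)
  then obtain i0 where i0: "i0 \<in> S" "c i0 - 1 = Suc 0" and others: "\<forall>i\<in>S. i0 \<noteq> i \<longrightarrow> c i - 1 = 0"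
    by (auto simp: sum_eq_Suc0_iff S_def)
  have "c i = 1" if "i \<le> r" "i \<noteq> i0" "i \<noteq> i1" for i
    using that others pos[of i] by (force simp: S_def)
  then show ?thesis
    using one_double[of i0 i1] i0 i1 by (simp add: S_def)
qed

lemma mu_shift:
  "mu r l d J = d 0 (J 0) * (\<Prod>a<r. l (Suc a) (J (Suc a)))
     + (\<Sum>b<r. l 0 (J 0) * d (Suc b) (J (Suc b)) * (\<Prod>a\<in>{..<r} - {b}. l (Suc a) (J (Suc a))))"
proof -
  have remove_as_if: "(\<Prod>i\<in>S - {k}. f i) = (\<Prod>i\<in>S. if i = k then 1 else f i)"
    if "finite S" for S :: "nat set" and k and f :: "nat \<Rightarrow> int"
    using that by (simp add: prod.If_cases Diff_eq)
  show ?thesis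
    unfolding mu_def atLeast0AtMost remove_as_if[OF finite_atMost] remove_as_if[OF finite_lessThan]
    by (simp add: sum.atMost_shift prod.atMost_shift sum_distrib_left algebra_simps)
qed

definition Pmat ::
    "nat \<Rightarrow> (nat \<Rightarrow> nat \<Rightarrow> int) \<Rightarrow> (nat \<Rightarrow> nat \<Rightarrow> int) \<Rightarrow> (nat \<Rightarrow> col) \<Rightarrow> int mat"
  where "Pmat r l d g = mat (Suc r) (Suc r) (\<lambda>(a, b). Pcol r l d (g b) a)"

lemma Pmat_carrier [simp]: "Pmat r l d g \<in> carrier_mat (Suc r) (Suc r)"
  by (simp add: Pmat_def)

lemma det_Pmat_transversal:
  assumes "\<And>i. 1 \<le> i \<Longrightarrow> i \<le> r \<Longrightarrow> l i (J i) \<noteq> 0"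
  shows "det (Pmat r l d (\<lambda>b. if b < r then Fc (Suc b) (J (Suc b)) else Fc 0 (J 0))) = mu r l d J"
proof (subst det_arrowhead)
  show "Pmat r l d (\<lambda>b. if b < r then Fc (Suc b) (J (Suc b)) else Fc 0 (J 0)) $$ (a, a) \<noteq> 0" if "a < r" for a
    using that assms by (simp add: Pmat_def)
qed (auto simp: Pmat_def mu_shift sum_negf)

lemma det_Pmat_double_block:
  assumes i0: "1 \<le> i0" "i0 \<le> r"
    and nz: "\<And>i. 1 \<le> i \<Longrightarrow> i \<le> r \<Longrightarrow> l i (J i) \<noteq> 0"
  shows "det (Pmat r l d (\<lambda>b. if b < r then Fc (Suc b) (J (Suc b)) else Fc i0 j'))
    = nu l d i0 (J i0) j' * (\<Prod>i\<in>{0..r} - {i0, 0}. l i (J i))"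
proof -
  define L where "L a = l (Suc a) (J (Suc a))" for a
  have shift: "{0..r} - {i0, 0} = Suc ` ({..<r} - {i0 - 1})"
  proof (rule Set.set_eqI)
    show "x \<in> {0..r} - {i0, 0} \<longleftrightarrow> x \<in> Suc ` ({..<r} - {i0 - 1})" for x
      using i0 by (cases x) auto
  qed
  have split: "(\<Prod>a<r. L a) = l i0 (J i0) * (\<Prod>a\<in>{..<r} - {i0 - 1}. L a)"
    using i0 by (subst prod.remove[of _ "i0 - 1"]) (auto simp: L_def)
  have col: "(if Suc b = i0 then l i0 j' else 0) * d (Suc b) (J (Suc b)) * (\<Prod>a\<in>{..<r} - {b}. L a)
      = (if b = i0 - 1 then l i0 j' * d i0 (J i0) * (\<Prod>a\<in>{..<r} - {i0 - 1}. L a) else 0)" for b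
    using i0 by auto
  have "det (Pmat r l d (\<lambda>b. if b < r then Fc (Suc b) (J (Suc b)) else Fc i0 j'))
      = d i0 j' * (\<Prod>a<r. L a)
        - (\<Sum>b<r. (if Suc b = i0 then l i0 j' else 0) * d (Suc b) (J (Suc b)) * (\<Prod>a\<in>{..<r} - {b}. L a))"
  proof (subst det_arrowhead)
    show "Pmat r l d (\<lambda>b. if b < r then Fc (Suc b) (J (Suc b)) else Fc i0 j') $$ (a, a) \<noteq> 0"
      if "a < r" for a
      using that nz by (simp add: Pmat_def)
  qed (use i0 in \<open>auto simp: Pmat_def L_def intro!: sum.cong\<close>)
  also have "\<dots> = d i0 j' * (\<Prod>a<r. L a) - l i0 j' * d i0 (J i0) * (\<Prod>a\<in>{..<r} - {i0 - 1}. L a)"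
    using i0 by (simp only: col) simp
  also have "\<dots> = nu l d i0 (J i0) j' * (\<Prod>a\<in>{..<r} - {i0 - 1}. L a)"
    unfolding split nu_def by (simp add: algebra_simps)
  also have "(\<Prod>a\<in>{..<r} - {i0 - 1}. L a) = (\<Prod>i\<in>{0..r} - {i0, 0}. l i (J i))"
    unfolding shift L_def by (simp add: prod.reindex)
  finally show ?thesis .
qed

lemma PA_eq_Pmat:
  assumes "card A = Suc r"
  obtains f where "bij_betw f {..<Suc r} A" and "PA r l d A = Pmat r l d f"
proof -
  have "\<exists>f. bij_betw f {..<Suc r} A"
    using assms ex_bij_betw_nat_finite[of A] card.infinite[of A] by (auto simp: lessThan_atLeast0)
  then show ?thesis
    using that someI_ex[of "\<lambda>f. bij_betw f {..<Suc r} A"] by (simp add: PA_def Pmat_def)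
qed

lemma abs_det_PA_eq_Pmat:
  assumes card: "card A = Suc r" and inj: "inj_on g {..<Suc r}" and g: "g ` {..<Suc r} \<subseteq> A"
  shows "\<bar>det (PA r l d A)\<bar> = \<bar>det (Pmat r l d g)\<bar>"
proof -
  obtain f where f: "bij_betw f {..<Suc r} A" and PA: "PA r l d A = Pmat r l d f"
    using PA_eq_Pmat[OF card] .
  have "g ` {..<Suc r} = A"
    using card inj g by (metis card_image card_lessThan card_subset_eq card.infinite nat.distinct(1))
  then have g_bij: "bij_betw g {..<Suc r} A"
    using inj by (simp add: bij_betw_def)
  define p where "p b = (if b < Suc r then inv_into {..<Suc r} f (g b) else b)" for b
  have "bij_betw p {..<Suc r} {..<Suc r}"
    using bij_betw_trans[OF g_bij bij_betw_inv_into[OF f]]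
    by (rule bij_betw_cong[THEN iffD1, rotated]) (auto simp: p_def)
  then have p: "p permutes {0..<Suc r}"
    by (intro bij_imp_permutes) (auto simp: p_def lessThan_atLeast0)
  have fp: "f (p b) = g b" if "b < Suc r" for b
    using that f g_bij by (auto simp: p_def bij_betw_def intro!: f_inv_into_f)
  have "Pmat r l d g = mat (Suc r) (Suc r) (\<lambda>(a, b). Pmat r l d f $$ (a, p b))"
    by (rule eq_matI) (use fp permutes_in_image[OF p] in \<open>simp_all add: Pmat_def lessThan_atLeast0\<close>)
  then have "det (Pmat r l d g) = signof p * det (PA r l d A)"
    unfolding PA by (simp add: det_permute_cols[OF Pmat_carrier p])
  then show ?thesis by (simp add: abs_mult sign_def)
qed

fun relabel_col :: "nat \<Rightarrow> col \<Rightarrow> col" where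
  "relabel_col k (Fc i j) = Fc (Transposition.transpose 0 k i) j"
| "relabel_col k c = c"

lemma relabel_col_0 [simp]: "relabel_col 0 c = c"
  by (cases c) simp_all

(* The automorphism of the lattice exchanging e_0 and e_k (1 \<le> k \<le> r) and fixing u, in the
   coordinates e_1, ..., e_r, u of the rows of P; coordinate k - 1 is that of e_k. *)
definition relabel_mat :: "nat \<Rightarrow> nat \<Rightarrow> int mat" where
  "relabel_mat r k = mat (Suc r) (Suc r) (\<lambda>(a, c).
     if c = k - 1 then (if a = r then 0 else -1) else of_bool (a = c))"

lemma relabel_mat_row_mult:
  assumes k: "1 \<le> k" "k \<le> r" and a: "a < Suc r"
  shows "(\<Sum>c<Suc r. relabel_mat r k $$ (a, c) * X c) =
    (if a = k - 1 then - X (k - 1) else if a = r then X r else X a - X (k - 1))"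
proof -
  have "(\<Sum>c<Suc r. relabel_mat r k $$ (a, c) * X c)
      = relabel_mat r k $$ (a, k - 1) * X (k - 1) + (\<Sum>c\<in>{..<Suc r} - {k - 1}. relabel_mat r k $$ (a, c) * X c)"
    using k by (subst sum.remove[of _ "k - 1"]) auto
  also have "(\<Sum>c\<in>{..<Suc r} - {k - 1}. relabel_mat r k $$ (a, c) * X c)
      = (\<Sum>c\<in>{..<Suc r} - {k - 1}. if c = a then X a else 0)"
    using a by (intro sum.cong) (auto simp: relabel_mat_def)
  finally show ?thesis
    using a k by (auto simp: relabel_mat_def)
qed

lemma relabel_mat_involutive:
  assumes "1 \<le> k" "k \<le> r"
  shows "relabel_mat r k * relabel_mat r k = 1\<^sub>m (Suc r)"
proof (rule eq_matI)
  fix a b assume ab: "a < dim_row (1\<^sub>m (Suc r))" "b < dim_col (1\<^sub>m (Suc r))"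
  then have "(relabel_mat r k * relabel_mat r k) $$ (a, b)
      = (\<Sum>c<Suc r. relabel_mat r k $$ (a, c) * relabel_mat r k $$ (c, b))"
    by (simp add: relabel_mat_def times_mat_def scalar_prod_def lessThan_atLeast0)
  also have "\<dots> = 1\<^sub>m (Suc r) $$ (a, b)"
    unfolding relabel_mat_row_mult[OF assms ab(1)[simplified]]
    using assms ab by (auto simp: relabel_mat_def)
  finally show "(relabel_mat r k * relabel_mat r k) $$ (a, b) = 1\<^sub>m (Suc r) $$ (a, b)" .
qed (simp_all add: relabel_mat_def)

lemma abs_det_relabel_mat:
  assumes "1 \<le> k" "k \<le> r"
  shows "\<bar>det (relabel_mat r k)\<bar> = 1"
proof -
  have "det (relabel_mat r k) * det (relabel_mat r k) = 1"
    using det_mult[of "relabel_mat r k" "Suc r" "relabel_mat r k"] relabel_mat_involutive[OF assms]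
    by (simp add: relabel_mat_def)
  then show ?thesis
    by (metis abs_mult_self_eq zmult_eq_1_iff abs_1 abs_neg_one)
qed

lemma relabel_mat_mult_Pmat:
  assumes k: "1 \<le> k" "k \<le> r"
  shows "relabel_mat r k * Pmat r l d g
    = Pmat r (l \<circ> Transposition.transpose 0 k) (d \<circ> Transposition.transpose 0 k) (relabel_col k \<circ> g)"
    (is "_ = ?P")
proof (rule eq_matI)
  fix a b assume "a < dim_row ?P" "b < dim_col ?P"
  then have ab: "a < Suc r" "b < Suc r" by (simp_all add: Pmat_def)
  then have "(relabel_mat r k * Pmat r l d g) $$ (a, b)
      = (\<Sum>c<Suc r. relabel_mat r k $$ (a, c) * Pcol r l d (g b) c)"
    by (simp add: relabel_mat_def Pmat_def times_mat_def scalar_prod_def lessThan_atLeast0)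
  also have "\<dots> = ?P $$ (a, b)"
    unfolding relabel_mat_row_mult[OF k ab(1)]
    using k ab by (cases "g b") (auto simp: Pmat_def Transposition.transpose_def)
  finally show "(relabel_mat r k * Pmat r l d g) $$ (a, b) = ?P $$ (a, b)" .
qed (simp_all add: relabel_mat_def Pmat_def)

lemma abs_det_Pmat_relabel:
  assumes "k \<le> r"
  shows "\<bar>det (Pmat r (l \<circ> Transposition.transpose 0 k) (d \<circ> Transposition.transpose 0 k) (relabel_col k \<circ> g))\<bar>
    = \<bar>det (Pmat r l d g)\<bar>"
proof (cases "k = 0")
  case False
  then have "det (Pmat r (l \<circ> Transposition.transpose 0 k) (d \<circ> Transposition.transpose 0 k) (relabel_col k \<circ> g))
      = det (relabel_mat r k) * det (Pmat r l d g)"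
    using assms by (simp add: relabel_mat_mult_Pmat [symmetric] det_mult [of _ "Suc r"] relabel_mat_def)
  then show ?thesis
    using False assms abs_det_relabel_mat[of k r] by (simp add: abs_mult)
qed (simp add: comp_def)

lemma abs_det_PA_transversal:
  assumes card: "card A = Suc r"
    and J: "\<And>i. i \<le> r \<Longrightarrow> Fc i (J i) \<in> A"
    and nz: "\<And>i. 1 \<le> i \<Longrightarrow> i \<le> r \<Longrightarrow> l i (J i) \<noteq> 0"
  shows "\<bar>det (PA r l d A)\<bar> = \<bar>mu r l d J\<bar>"
proof -
  define g where "g b = (if b < r then Fc (Suc b) (J (Suc b)) else Fc 0 (J 0))" for b
  have "inj_on g {..<Suc r}"
    by (auto simp: g_def inj_on_def split: if_splits)
  moreover have "g ` {..<Suc r} \<subseteq> A"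
    using J by (auto simp: g_def)
  moreover have "det (Pmat r l d g) = mu r l d J"
    unfolding g_def by (rule det_Pmat_transversal) (rule nz)
  ultimately show ?thesis
    using abs_det_PA_eq_Pmat[OF card] by simp
qed

lemma abs_det_PA_double_block:
  assumes card: "card A = Suc r" and i0: "i0 \<le> r" and i1: "i1 \<le> r" "i0 \<noteq> i1"
    and J: "\<And>i. i \<le> r \<Longrightarrow> i \<noteq> i1 \<Longrightarrow> Fc i (J i) \<in> A"
    and nz: "\<And>i. i \<le> r \<Longrightarrow> i \<noteq> i1 \<Longrightarrow> l i (J i) \<noteq> 0"
    and j': "Fc i0 j' \<in> A" "j' \<noteq> J i0"
  shows "\<bar>det (PA r l d A)\<bar> = \<bar>nu l d i0 (J i0) j' * (\<Prod>i\<in>{0..r} - {i0, i1}. l i (J i))\<bar>"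
proof -
  define \<tau> where "\<tau> = Transposition.transpose 0 i1"
  have \<tau>_le: "\<tau> i \<le> r" if "i \<le> r" for i
    using that i1 by (auto simp: \<tau>_def Transposition.transpose_def)
  have \<tau>_eq_0: "\<tau> i = 0 \<longleftrightarrow> i = i1" and \<tau>_eq_i1: "\<tau> i = i1 \<longleftrightarrow> i = 0" for i
    by (auto simp: \<tau>_def Transposition.transpose_def)
  have \<tau>_\<tau> [simp]: "\<tau> (\<tau> i) = i" for i
    by (simp add: \<tau>_def)
  have \<tau>_inj: "\<tau> i = \<tau> k \<longleftrightarrow> i = k" for i k
    by (metis \<tau>_\<tau>)
  define g where "g b = (if b < r then Fc (\<tau> (Suc b)) (J (\<tau> (Suc b))) else Fc i0 j')" for b
  have "inj_on g {..<Suc r}"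
    using j'(2) by (auto simp: g_def inj_on_def \<tau>_inj split: if_splits)
  moreover have "g ` {..<Suc r} \<subseteq> A"
    using J j'(1) \<tau>_le \<tau>_eq_i1 by (auto simp: g_def)
  ultimately have "\<bar>det (PA r l d A)\<bar> = \<bar>det (Pmat r l d g)\<bar>"
    by (rule abs_det_PA_eq_Pmat[OF card])
  \<comment> \<open>After exchanging e_0 and e_i1, the block left out is F_0.\<close>
  also have "\<dots> = \<bar>det (Pmat r (l \<circ> \<tau>) (d \<circ> \<tau>) (relabel_col i1 \<circ> g))\<bar>"
    unfolding \<tau>_def by (rule abs_det_Pmat_relabel[OF i1(1), symmetric])
  also have "relabel_col i1 \<circ> g = (\<lambda>b. if b < r then Fc (Suc b) ((J \<circ> \<tau>) (Suc b)) else Fc (\<tau> i0) j')"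
    by (auto simp: g_def \<tau>_def [symmetric])
  also have "det (Pmat r (l \<circ> \<tau>) (d \<circ> \<tau>) \<dots>)
      = nu (l \<circ> \<tau>) (d \<circ> \<tau>) (\<tau> i0) ((J \<circ> \<tau>) (\<tau> i0)) j'
        * (\<Prod>i\<in>{0..r} - {\<tau> i0, 0}. (l \<circ> \<tau>) i ((J \<circ> \<tau>) i))"
    by (rule det_Pmat_double_block) (use i0 i1 \<tau>_le \<tau>_eq_0 \<tau>_eq_i1 nz in \<open>auto simp: Suc_le_eq\<close>)
  also have "nu (l \<circ> \<tau>) (d \<circ> \<tau>) (\<tau> i0) ((J \<circ> \<tau>) (\<tau> i0)) j' = nu l d i0 (J i0) j'"
    by (simp add: nu_def)
  also have "(\<Prod>i\<in>{0..r} - {\<tau> i0, 0}. (l \<circ> \<tau>) i ((J \<circ> \<tau>) i)) = (\<Prod>i\<in>{0..r} - {i0, i1}. l i (J i))"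
    unfolding comp_def
    by (rule prod.reindex_bij_betw, rule bij_betw_byWitness[where f' = \<tau>])
      (auto simp: \<tau>_le \<tau>_eq_0 \<tau>_eq_i1 \<tau>_inj eq_commute[of i1])
  finally show ?thesis .
qed

lemma det_PA_two_empty_blocks:
  assumes card: "card A = Suc r" and k: "k1 \<le> r" "1 \<le> k2" "k2 \<le> r" "k1 \<noteq> k2"
    and A: "\<And>c. c \<in> A \<Longrightarrow> \<exists>i j. c = Fc i j \<and> i \<noteq> k1 \<and> i \<noteq> k2"
  shows "det (PA r l d A) = 0"
proof -
  obtain f where f: "bij_betw f {..<Suc r} A" and PA: "PA r l d A = Pmat r l d f"
    using PA_eq_Pmat[OF card] .
  have cols: "\<exists>i j. f b = Fc i j \<and> i \<noteq> k1 \<and> i \<noteq> k2" if "b < Suc r" for b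
    using A f that by (auto simp: bij_betw_def)
  \<comment> \<open>Row i - 1 of P, for 1 \<le> i \<le> r, is nonzero only on the blocks F_0 and F_i.\<close>
  show ?thesis
  proof (cases "k1 = 0")
    case True
    have "det (Pmat r l d f) = (\<Sum>b<Suc r. Pmat r l d f $$ (k2 - 1, b) * cofactor (Pmat r l d f) (k2 - 1) b)"
      using k by (intro laplace_expansion_row) auto
    also have "\<dots> = 0"
      using cols True k by (force simp: Pmat_def intro!: sum.neutral)
    finally show ?thesis unfolding PA .
  next
    case False
    have "row (Pmat r l d f) (k1 - 1) = row (Pmat r l d f) (k2 - 1)"
      using cols False k by (force simp: Pmat_def intro!: eq_vecI)
    then show ?thesis
      unfolding PA by (rule det_identical_rows[OF Pmat_carrier, rotated 3]) (use False k in auto)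
  qed
qed

lemma card_eq_sum_blocks:
  assumes "finite A" "A \<subseteq> (\<Union>i\<le>r. Fblock n i)"
  shows "card A = (\<Sum>i\<le>r. card (A \<inter> Fblock n i))"
proof -
  have "A = (\<Union>i\<le>r. A \<inter> Fblock n i)"
    using assms(2) by blast
  also have "card \<dots> = (\<Sum>i\<le>r. card (A \<inter> Fblock n i))"
    by (rule card_UN_disjoint) (use assms(1) in \<open>auto simp: Fblock_def\<close>)
  finally show ?thesis .
qed

lemma empty_block_unique:
  assumes card: "card A = Suc r" and A: "A \<subseteq> (\<Union>i\<le>r. Fblock n i)" and det: "det (PA r l d A) \<noteq> 0"
    and k: "k1 \<le> r" "k2 \<le> r" and empty: "A \<inter> Fblock n k1 = {}" "A \<inter> Fblock n k2 = {}"
  shows "k1 = k2"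
proof (rule ccontr)
  assume "k1 \<noteq> k2"
  have avoid: "\<exists>i j. x = Fc i j \<and> i \<noteq> k1 \<and> i \<noteq> k2" if x: "x \<in> A" for x
  proof -
    obtain i where i: "x \<in> Fblock n i"
      using x A by blast
    then have "i \<noteq> k1" "i \<noteq> k2"
      using x empty by auto
    with i show ?thesis by (auto simp: Fblock_def)
  qed
  then have avoid': "\<exists>i j. x = Fc i j \<and> i \<noteq> k2 \<and> i \<noteq> k1" if "x \<in> A" for x
    using that by blast
  have "det (PA r l d A) = 0"
  proof (cases "k2 = 0")
    case True
    then show ?thesis
      using det_PA_two_empty_blocks[OF card _ _ _ _ avoid'] k \<open>k1 \<noteq> k2\<close> by simp
  next
    case False
    then show ?thesis
      using det_PA_two_empty_blocks[OF card _ _ _ _ avoid] k \<open>k1 \<noteq> k2\<close> by simp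
  qed
  then show False using det by simp
qed

lemma obtain_block_representatives:
  assumes "\<forall>i\<le>r. 1 \<le> n i"
  obtains J where "\<forall>i\<le>r. 1 \<le> J i \<and> J i \<le> n i"
    and "\<forall>i\<le>r. A \<inter> Fblock n i \<noteq> {} \<longrightarrow> Fc i (J i) \<in> A"
proof
  define J where "J i = (if A \<inter> Fblock n i \<noteq> {} then SOME j. Fc i j \<in> A \<inter> Fblock n i else 1)" for i
  have J: "Fc i (J i) \<in> A \<inter> Fblock n i" if "A \<inter> Fblock n i \<noteq> {}" for i
    using that someI_ex[of "\<lambda>j. Fc i j \<in> A \<inter> Fblock n i"] by (auto simp: J_def Fblock_def)
  show "\<forall>i\<le>r. 1 \<le> J i \<and> J i \<le> n i"
  proof (intro allI impI)
    fix i assume "i \<le> r"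
    then show "1 \<le> J i \<and> J i \<le> n i"
      using assms J[of i] by (cases "A \<inter> Fblock n i = {}") (auto simp: J_def Fblock_def)
  qed
  show "\<forall>i\<le>r. A \<inter> Fblock n i \<noteq> {} \<longrightarrow> Fc i (J i) \<in> A"
    using J by blast
qed

lemma abs_det_PA_one_per_block:
  assumes card: "card A = Suc r" and n: "\<forall>i\<le>r. 1 \<le> n i"
    and lpos: "\<forall>i\<le>r. \<forall>j. 1 \<le> j \<and> j \<le> n i \<longrightarrow> l i j \<ge> 1"
    and one: "\<forall>i\<le>r. card (A \<inter> Fblock n i) = 1"
  shows "\<exists>J. (\<forall>i\<le>r. 1 \<le> J i \<and> J i \<le> n i) \<and> \<bar>det (PA r l d A)\<bar> = \<bar>mu r l d J\<bar>"
proof -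
  obtain J where J_range: "\<forall>i\<le>r. 1 \<le> J i \<and> J i \<le> n i"
    and J_in: "\<forall>i\<le>r. A \<inter> Fblock n i \<noteq> {} \<longrightarrow> Fc i (J i) \<in> A"
    using obtain_block_representatives[OF n] .
  have "\<bar>det (PA r l d A)\<bar> = \<bar>mu r l d J\<bar>"
  proof (rule abs_det_PA_transversal[OF card])
    show "Fc i (J i) \<in> A" if "i \<le> r" for i
      using that one J_in by fastforce
    show "l i (J i) \<noteq> 0" if "1 \<le> i" "i \<le> r" for i
      using that lpos J_range by fastforce
  qed
  with J_range show ?thesis by blast
qed

lemma abs_det_PA_two_in_block:
  assumes card: "card A = Suc r" and n: "\<forall>i\<le>r. 1 \<le> n i"
    and lpos: "\<forall>i\<le>r. \<forall>j. 1 \<le> j \<and> j \<le> n i \<longrightarrow> l i j \<ge> 1"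
    and i0: "i0 \<le> r" "card (A \<inter> Fblock n i0) = 2" and i1: "i1 \<le> r" "card (A \<inter> Fblock n i1) = 0"
    and others: "\<forall>i\<le>r. i \<noteq> i0 \<and> i \<noteq> i1 \<longrightarrow> card (A \<inter> Fblock n i) = 1"
  shows "\<exists>J j'. (\<forall>i\<le>r. 1 \<le> J i \<and> J i \<le> n i) \<and> 1 \<le> j' \<and> j' \<le> n i0 \<and>
    \<bar>det (PA r l d A)\<bar> = \<bar>nu l d i0 (J i0) j'\<bar> * (\<Prod>i\<in>{0..r} - {i0, i1}. l i (J i))"
proof -
  obtain J where J_range: "\<forall>i\<le>r. 1 \<le> J i \<and> J i \<le> n i"
    and J_in: "\<forall>i\<le>r. A \<inter> Fblock n i \<noteq> {} \<longrightarrow> Fc i (J i) \<in> A"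
    using obtain_block_representatives[OF n] .
  have l_pos: "0 < l i (J i)" if "i \<le> r" for i
    using lpos J_range that by fastforce
  have l_nz: "l i (J i) \<noteq> 0" if "i \<le> r" for i
    using l_pos[OF that] by simp
  have i01: "i0 \<noteq> i1"
    using i0 i1 by auto
  have J_in': "Fc i (J i) \<in> A" if "i \<le> r" "i \<noteq> i1" for i
  proof -
    have "card (A \<inter> Fblock n i) \<noteq> 0"
      using that i0 others by (cases "i = i0") auto
    then show ?thesis
      using that J_in by fastforce
  qed
  have "Fc i0 (J i0) \<in> A \<inter> Fblock n i0"
    using J_in'[OF i0(1) i01] J_range i0 by (simp add: Fblock_def)
  then have "card (A \<inter> Fblock n i0 - {Fc i0 (J i0)}) = 1"
    using i0 card_ge_0_finite[of A] card by simp
  then obtain x where "A \<inter> Fblock n i0 - {Fc i0 (J i0)} = {x}"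
    by (rule card_1_singletonE)
  then have "x \<in> A" "x \<in> Fblock n i0" "x \<noteq> Fc i0 (J i0)"
    by auto
  then obtain j' where j': "Fc i0 j' \<in> A" "j' \<noteq> J i0" "1 \<le> j'" "j' \<le> n i0"
    by (auto simp: Fblock_def)
  have "\<bar>det (PA r l d A)\<bar> = \<bar>nu l d i0 (J i0) j' * (\<Prod>i\<in>{0..r} - {i0, i1}. l i (J i))\<bar>"
    by (rule abs_det_PA_double_block) (use card i0(1) i1(1) i01 J_in' l_nz j'(1,2) in simp_all)
  moreover have "0 \<le> (\<Prod>i\<in>{0..r} - {i0, i1}. l i (J i))"
    using l_pos by (intro prod_nonneg) (simp add: less_imp_le)
  ultimately show ?thesis
    using J_range j'(3,4) by (auto simp: abs_mult)
qed

theorem lemma4p6: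
  fixes r :: nat and n :: "nat \<Rightarrow> nat" and l d :: "nat \<Rightarrow> nat \<Rightarrow> int"
    and F' A :: "col set"
  assumes r: "r \<ge> 1"
    and n: "\<forall>i\<le>r. n i \<ge> 1"
    and lpos: "\<forall>i\<le>r. \<forall>j. 1 \<le> j \<and> j \<le> n i \<longrightarrow> l i j \<ge> 1"
    and cop: "\<forall>i\<le>r. \<forall>j. 1 \<le> j \<and> j \<le> n i \<longrightarrow> gcd (l i j) (d i j) = 1"
    and slopes: "\<forall>i\<le>r. \<forall>j. 1 \<le> j \<and> j < n i \<longrightarrow>
        real_of_int (d i j) / real_of_int (l i j) > real_of_int (d i (j+1)) / real_of_int (l i (j+1))"
    and F': "F' \<subseteq> {Fplus, Fminus}"
    and AF: "A \<subseteq> Fset r n F'"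
    and cardA: "card A = r + 1"
    and detA: "det (PA r l d A) \<noteq> 0"
    and AF': "A \<inter> F' = {}"
  shows "((\<forall>i\<le>r. card (A \<inter> Fblock n i) = 1) \<and>
           (\<exists>j. (\<forall>i\<le>r. 1 \<le> j i \<and> j i \<le> n i) \<and>
                \<bar>det (PA r l d A)\<bar> = \<bar>mu r l d j\<bar>))
       \<or> (\<exists>i0 i1. i0 \<le> r \<and> i1 \<le> r \<and>
           card (A \<inter> Fblock n i0) = 2 \<and> card (A \<inter> Fblock n i1) = 0 \<and>
           (\<forall>i\<le>r. i \<noteq> i0 \<and> i \<noteq> i1 \<longrightarrow> card (A \<inter> Fblock n i) = 1) \<and>
           (\<exists>j j'. (\<forall>i\<le>r. 1 \<le> j i \<and> j i \<le> n i) \<and> 1 \<le> j' \<and> j' \<le> n i0 \<and>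
              \<bar>det (PA r l d A)\<bar> =
                \<bar>nu l d i0 (j i0) j'\<bar> * (\<Prod>i\<in>{0..r} - {i0, i1}. l i (j i))))"
proof -
  have card: "card A = Suc r"
    using cardA by simp
  have blocks: "A \<subseteq> (\<Union>i\<le>r. Fblock n i)"
    using AF AF' by (auto simp: Fset_def)
  have sum: "(\<Sum>i\<le>r. card (A \<inter> Fblock n i)) = Suc r"
    using card_eq_sum_blocks[OF _ blocks] card card_ge_0_finite[of A] by simp
  have zero_unique:
      "\<forall>i\<le>r. \<forall>k\<le>r. card (A \<inter> Fblock n i) = 0 \<and> card (A \<inter> Fblock n k) = 0 \<longrightarrow> i = k"
    using empty_block_unique[OF card blocks detA] card card_ge_0_finite[of A] by simp
  from sum zero_unique show ?thesis
  proof (cases rule: sum_eq_Suc_cases)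
    case all_one
    then show ?thesis
      by (intro disjI1 conjI abs_det_PA_one_per_block[OF card n lpos])
  next
    case (one_double i0 i1)
    then have "\<exists>J j'. (\<forall>i\<le>r. 1 \<le> J i \<and> J i \<le> n i) \<and> 1 \<le> j' \<and> j' \<le> n i0 \<and>
        \<bar>det (PA r l d A)\<bar> = \<bar>nu l d i0 (J i0) j'\<bar> * (\<Prod>i\<in>{0..r} - {i0, i1}. l i (J i))"
      by (rule abs_det_PA_two_in_block[OF card n lpos])
    with one_double show ?thesis
      by (intro disjI2 exI[of _ i0] exI[of _ i1] conjI) simp_all
  qed
qed

end
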